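(* Every strongly $D$-continuous poset with complementation is pseudo-orthomodular. Every finite pseudo-orthomodular poset is strongly $D$-continuous.
   Context: For $M\subseteq P$, $U(M)$, $L(M)$ are the sets of upper and lower bounds; $U(a,b)=U(\{a,b\})$ etc. For $B,C\subseteq P$, $B\le C$ means $b\le c$ for all $b\in B$, $c\in C$. A poset with complementation is a bounded poset $(P,\le,{}',0,1)$ with antitone involution $'$ ($x\le y\Rightarrow y'\le x'$, $x''=x$) with $L(x,x')=\{0\}$, $U(x,x')=\{1\}$; it is pseudo-orthomodular if $L(U(L(x,y),y'),y)=L(x,y)$ for all $x,y$. It is strongly $D$-continuous if for all $B,C\subseteq P$ with $B\le C$: $\bigwedge_{\mathbf P}\{g\in P\mid g\in C\text{ or } g'\in B\}=0$ if and only if every lower bound of $C$ in $P$ is below every upper bound of $B$ in $P$. *)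

theory Defs
  imports Main
begin

definition Ub :: "'a::order set \<Rightarrow> 'a set" where
  "Ub M = {x. \<forall>m\<in>M. m \<le> x}"

definition Lb :: "'a::order set \<Rightarrow> 'a set" where
  "Lb M = {x. \<forall>m\<in>M. x \<le> m}"

definition set_le :: "'a::order set \<Rightarrow> 'a set \<Rightarrow> bool" where
  "set_le B C \<longleftrightarrow> (\<forall>b\<in>B. \<forall>c\<in>C. b \<le> c)"

definition is_meet :: "'a::order set \<Rightarrow> 'a \<Rightarrow> bool" where
  "is_meet S a \<longleftrightarrow> a \<in> Lb S \<and> (\<forall>b\<in>Lb S. b \<le> a)"

definition poset_compl :: "('a::order \<Rightarrow> 'a) \<Rightarrow> 'a \<Rightarrow> 'a \<Rightarrow> bool" where
  "poset_compl c z u \<longleftrightarrow>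
     (\<forall>x. z \<le> x \<and> x \<le> u) \<and>
     (\<forall>x y. x \<le> y \<longrightarrow> c y \<le> c x) \<and>
     (\<forall>x. c (c x) = x) \<and>
     (\<forall>x. Lb {x, c x} = {z}) \<and>
     (\<forall>x. Ub {x, c x} = {u})"

definition pseudo_orthomodular :: "('a::order \<Rightarrow> 'a) \<Rightarrow> bool" where
  "pseudo_orthomodular c \<longleftrightarrow>
     (\<forall>x y. Lb (Ub (Lb {x, y} \<union> {c y}) \<union> {y}) = Lb {x, y})"

definition strongly_D_continuous :: "('a::order \<Rightarrow> 'a) \<Rightarrow> 'a \<Rightarrow> bool" where
  "strongly_D_continuous c z \<longleftrightarrow>
     (\<forall>B C. set_le B C \<longrightarrow>
        (is_meet {g. g \<in> C \<or> c g \<in> B} z \<longleftrightarrow> set_le (Lb C) (Ub B)))"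

end

theory Submission
  imports Defs
begin

text \<open>
  If the meet of \<open>C \<union> B'\<close> is 0, pseudo-orthomodularity allows to enlarge \<open>B\<close> by \<open>m'\<close> and
  replace \<open>C\<close> by \<open>U(L(C), m')\<close>, for any \<open>m \<noteq> 1\<close> above \<open>L(C)\<close>, without destroying this
  property and without losing information: the conclusion \<open>L(C) \<le> U(B)\<close> can be recovered
  from the one for the new pair, since pseudo-orthomodularity extends from \<open>L(x, y)\<close> to
  \<open>L(X)\<close> for arbitrary sets \<open>X\<close>. The new \<open>U(B)\<close> is strictly smaller, so in a finite poset
  the process ends with \<open>L(C)\<close> having 1 as its only upper bound, where the conclusion is
  immediate. Conversely, strong D-continuity applied to \<open>B = L(x, y)\<close> and
  \<open>C = U(L(x, y), y') \<union> {y}\<close> yields the pseudo-orthomodular law.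
\<close>

lemma Lb_iff: "x \<in> Lb M \<longleftrightarrow> (\<forall>m\<in>M. x \<le> m)"
  by (simp add: Lb_def)

lemma Ub_iff: "x \<in> Ub M \<longleftrightarrow> (\<forall>m\<in>M. m \<le> x)"
  by (simp add: Ub_def)

lemma Lb_antimono: "A \<subseteq> B \<Longrightarrow> Lb B \<subseteq> Lb A"
  by (auto simp: Lb_def)

lemma Ub_antimono: "A \<subseteq> B \<Longrightarrow> Ub B \<subseteq> Ub A"
  by (auto simp: Ub_def)

lemma subset_Lb_Ub: "A \<subseteq> Lb (Ub A)"
  by (auto simp: Lb_iff Ub_iff)

lemma subset_Ub_Lb: "A \<subseteq> Ub (Lb A)"
  by (auto simp: Lb_iff Ub_iff)

lemma set_le_iff_subset_Lb: "set_le B C \<longleftrightarrow> B \<subseteq> Lb C"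
  by (auto simp: set_le_def Lb_iff)

lemma set_le_iff_subset_Ub: "set_le B C \<longleftrightarrow> C \<subseteq> Ub B"
  by (auto simp: set_le_def Ub_iff)

lemma pseudo_orthomodular_Lb:
  assumes pom: "pseudo_orthomodular c" and y: "y \<in> Ub (Lb X)"
  shows "Lb (Ub (Lb X \<union> {c y}) \<union> {y}) = Lb X"
proof
  show "Lb X \<subseteq> Lb (Ub (Lb X \<union> {c y}) \<union> {y})"
    using y by (auto simp: Lb_iff Ub_iff)
next
  show "Lb (Ub (Lb X \<union> {c y}) \<union> {y}) \<subseteq> Lb X"
  proof
    fix v assume v: "v \<in> Lb (Ub (Lb X \<union> {c y}) \<union> {y})"
    have "v \<le> x" if "x \<in> X" for x
    proof -
      have "Lb X \<subseteq> Lb {x, y}"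
        using \<open>x \<in> X\<close> y by (auto simp: Lb_iff Ub_iff)
      then have "Lb (Ub (Lb X \<union> {c y}) \<union> {y}) \<subseteq> Lb (Ub (Lb {x, y} \<union> {c y}) \<union> {y})"
        by (intro Lb_antimono Un_mono[OF Ub_antimono] order.refl) blast
      also have "\<dots> = Lb {x, y}"
        using pom by (simp add: pseudo_orthomodular_def)
      finally have "v \<in> Lb {x, y}"
        using v by blast
      then show "v \<le> x"
        by (simp add: Lb_iff)
    qed
    then show "v \<in> Lb X" by (simp add: Lb_iff)
  qed
qed

lemma set_le_Lb_Ub_from_extension:
  assumes pom: "pseudo_orthomodular c" and BC: "set_le B C" and m: "m \<in> Ub (Lb C)"
    and ext: "set_le (Lb (Ub (Lb C \<union> {c m}))) (Ub (insert (c m) B))"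
  shows "set_le (Lb C) (Ub B)"
  unfolding set_le_iff_subset_Lb
proof
  fix w assume w: "w \<in> Lb C"
  have "w \<in> Lb (Ub (Lb C \<union> {c m}))"
    using w subset_Lb_Ub by blast
  then have "w \<in> Lb (Ub (insert (c m) B))"
    using ext by (simp add: set_le_iff_subset_Lb subset_iff)
  moreover have "Ub (Lb (Ub B) \<union> {c m}) \<subseteq> Ub (insert (c m) B)"
    by (rule Ub_antimono) (use subset_Lb_Ub[of B] in blast)
  ultimately have "w \<in> Lb (Ub (Lb (Ub B) \<union> {c m}))"
    using Lb_antimono by blast
  moreover have "w \<le> m"
    using w m by (simp add: Ub_iff)
  ultimately have "w \<in> Lb (Ub (Lb (Ub B) \<union> {c m}) \<union> {m})"
    by (simp add: Lb_iff)
  moreover have "m \<in> Ub (Lb (Ub B))"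
    using m Ub_antimono[OF Lb_antimono] BC unfolding set_le_iff_subset_Ub by blast
  ultimately show "w \<in> Lb (Ub B)"
    using pseudo_orthomodular_Lb[OF pom] by blast
qed

locale complemented_poset =
  fixes c :: "'a::order \<Rightarrow> 'a" and z u :: 'a
  assumes poset_compl: "poset_compl c z u"
begin

lemma bot_le: "z \<le> x"
  using poset_compl by (simp add: poset_compl_def)

lemma le_top: "x \<le> u"
  using poset_compl by (simp add: poset_compl_def)

lemma compl_antitone: "x \<le> y \<Longrightarrow> c y \<le> c x"
  using poset_compl by (simp add: poset_compl_def)

lemma compl_compl [simp]: "c (c x) = x"
  using poset_compl by (simp add: poset_compl_def)

lemma le_compl_swap: "x \<le> c y \<Longrightarrow> y \<le> c x"
  using compl_antitone[of x "c y"] by simp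

lemma le_own_compl: "x \<le> c x \<Longrightarrow> x = z"
proof -
  assume "x \<le> c x"
  then have "x \<in> Lb {x, c x}" by (simp add: Lb_iff)
  then show "x = z" using poset_compl by (simp add: poset_compl_def)
qed

lemma compl_eq_bot_iff: "c x = z \<longleftrightarrow> x = u"
proof -
  have "c z \<in> Ub {z, c z}" by (simp add: Ub_iff bot_le)
  then have "c z = u" using poset_compl by (simp add: poset_compl_def)
  then show ?thesis
    using compl_compl[of x] compl_compl[of z] by fastforce
qed

lemma Lb_union_compl: "Lb {g. g \<in> C \<or> c g \<in> B} = {v \<in> Lb C. c v \<in> Ub B}"
proof -
  have "(\<forall>g. c g \<in> B \<longrightarrow> v \<le> g) \<longleftrightarrow> c v \<in> Ub B" for v
  proof
    show "c v \<in> Ub B" if "\<forall>g. c g \<in> B \<longrightarrow> v \<le> g"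
      using that le_compl_swap[of v] by (auto simp: Ub_iff)
    show "\<forall>g. c g \<in> B \<longrightarrow> v \<le> g" if "c v \<in> Ub B"
      using that le_compl_swap[of "c _" v] by (auto simp: Ub_iff)
  qed
  then show ?thesis
    by (auto simp: Lb_iff all_conj_distrib)
qed

definition zero_meet :: "'a set \<Rightarrow> 'a set \<Rightarrow> bool" where
  "zero_meet B C \<longleftrightarrow> (\<forall>v\<in>Lb C. c v \<in> Ub B \<longrightarrow> v = z)"

lemma is_meet_bot_iff_zero_meet: "is_meet {g. g \<in> C \<or> c g \<in> B} z \<longleftrightarrow> zero_meet B C"
proof -
  have "is_meet S z \<longleftrightarrow> (\<forall>v\<in>Lb S. v = z)" for S
    using bot_le by (auto simp: is_meet_def Lb_iff intro: order.antisym)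
  then show ?thesis
    by (auto simp: zero_meet_def Lb_union_compl)
qed

lemma zero_meet_if_set_le_Lb_Ub: "set_le (Lb C) (Ub B) \<Longrightarrow> zero_meet B C"
  using le_own_compl by (auto simp: zero_meet_def set_le_def)

lemma strongly_D_continuous_iff:
  "strongly_D_continuous c z \<longleftrightarrow>
     (\<forall>B C. set_le B C \<longrightarrow> zero_meet B C \<longrightarrow> set_le (Lb C) (Ub B))"
  unfolding strongly_D_continuous_def is_meet_bot_iff_zero_meet
  using zero_meet_if_set_le_Lb_Ub by blast

lemma strongly_D_continuous_imp_pseudo_orthomodular:
  assumes "strongly_D_continuous c z"
  shows "pseudo_orthomodular c"
  unfolding pseudo_orthomodular_def
proof (intro allI)
  fix x y :: 'a
  define B where "B = Lb {x, y}"
  define C where "C = Ub (B \<union> {c y}) \<union> {y}"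
  have "set_le B C"
    by (auto simp: B_def C_def set_le_def Lb_iff Ub_iff)
  moreover have "zero_meet B C"
    unfolding zero_meet_def
  proof (intro ballI impI)
    fix v assume "v \<in> Lb C" "c v \<in> Ub B"
    have "c y \<le> c v"
      using \<open>v \<in> Lb C\<close> compl_antitone by (simp add: C_def Lb_iff)
    then have "c v \<in> C"
      using \<open>c v \<in> Ub B\<close> by (simp add: C_def Ub_iff)
    then show "v = z"
      using \<open>v \<in> Lb C\<close> le_own_compl by (simp add: Lb_iff)
  qed
  ultimately have "set_le (Lb C) (Ub B)"
    using assms by (simp add: strongly_D_continuous_iff)
  moreover have "x \<in> Ub B"
    by (simp add: B_def Ub_iff Lb_iff)
  ultimately have "Lb C \<subseteq> Lb {x, y}"
    by (auto simp: set_le_def C_def Lb_iff)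
  moreover have "Lb {x, y} \<subseteq> Lb C"
    by (auto simp: B_def C_def Lb_iff Ub_iff)
  ultimately show "Lb (Ub (Lb {x, y} \<union> {c y}) \<union> {y}) = Lb {x, y}"
    by (simp add: B_def C_def)
qed

lemma set_le_Lb_Ub_if_Ub_Lb_top:
  assumes top: "Ub (Lb C) \<subseteq> {u}" and "zero_meet B C"
  shows "set_le (Lb C) (Ub B)"
  unfolding set_le_def
proof (intro ballI)
  fix w t assume "w \<in> Lb C" "t \<in> Ub B"
  have "C \<subseteq> {u}"
    using subset_Ub_Lb top by (rule order.trans)
  then have "c t \<in> Lb C"
    using le_top by (auto simp: Lb_iff)
  then have "c t = z"
    using \<open>zero_meet B C\<close> \<open>t \<in> Ub B\<close> by (simp add: zero_meet_def)
  then have "t = u"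
    by (simp add: compl_eq_bot_iff)
  then show "w \<le> t"
    using le_top by simp
qed

lemma Ub_insert_compl_psubset:
  assumes BC: "set_le B C" and m: "m \<in> Ub (Lb C)" "m \<noteq> u"
  shows "Ub (insert (c m) B) \<subset> Ub B"
proof
  show "Ub (insert (c m) B) \<subseteq> Ub B"
    by (rule Ub_antimono) (rule subset_insertI)
  show "Ub (insert (c m) B) \<noteq> Ub B"
  proof
    assume eq: "Ub (insert (c m) B) = Ub B"
    have "c m \<in> Lb (Ub (insert (c m) B))"
      by (rule subsetD[OF subset_Lb_Ub]) simp
    moreover have "Lb (Ub B) \<subseteq> Lb C"
      using BC by (simp add: set_le_iff_subset_Ub Lb_antimono)
    ultimately have "c m \<in> Lb C"
      using eq by auto
    then have "c m \<le> c (c m)"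
      using m(1) by (simp add: Ub_iff)
    then have "c m = z"
      by (rule le_own_compl)
    with m(2) show False
      by (simp add: compl_eq_bot_iff)
  qed
qed

lemma zero_meet_extension:
  assumes pom: "pseudo_orthomodular c" and m: "m \<in> Ub (Lb C)" and "zero_meet B C"
  shows "zero_meet (insert (c m) B) (Ub (Lb C \<union> {c m}))"
  unfolding zero_meet_def
proof (intro ballI impI)
  fix v assume v: "v \<in> Lb (Ub (Lb C \<union> {c m}))" and cv: "c v \<in> Ub (insert (c m) B)"
  then have "v \<le> m"
    using compl_antitone[of "c m" "c v"] by (simp add: Ub_iff)
  with v have "v \<in> Lb (Ub (Lb C \<union> {c m}) \<union> {m})"
    by (simp add: Lb_iff)
  then have "v \<in> Lb C"
    using pseudo_orthomodular_Lb[OF pom m] by simp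
  moreover have "c v \<in> Ub B"
    using cv by (simp add: Ub_iff)
  ultimately show "v = z"
    using \<open>zero_meet B C\<close> by (simp add: zero_meet_def)
qed

lemma finite_pseudo_orthomodular_set_le_Lb_Ub:
  assumes fin: "finite (UNIV :: 'a set)" and pom: "pseudo_orthomodular c"
    and "set_le B C" and "zero_meet B C"
  shows "set_le (Lb C) (Ub B)"
  using assms(3,4)
proof (induction "card (Ub B)" arbitrary: B C rule: less_induct)
  case less
  show ?case
  proof (cases "Ub (Lb C) \<subseteq> {u}")
    case True
    then show ?thesis
      using less.prems(2) by (rule set_le_Lb_Ub_if_Ub_Lb_top)
  next
    case False
    then obtain m where m: "m \<in> Ub (Lb C)" "m \<noteq> u" by blast
    have "card (Ub (insert (c m) B)) < card (Ub B)"
      using Ub_insert_compl_psubset[OF less.prems(1) m] fin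
      by (meson psubset_card_mono finite_subset subset_UNIV)
    moreover have "set_le (insert (c m) B) (Ub (Lb C \<union> {c m}))"
      using less.prems(1) by (auto simp: set_le_def Lb_iff Ub_iff)
    ultimately have "set_le (Lb (Ub (Lb C \<union> {c m}))) (Ub (insert (c m) B))"
      using less.hyps zero_meet_extension[OF pom m(1) less.prems(2)] by blast
    then show ?thesis
      using set_le_Lb_Ub_from_extension[OF pom less.prems(1) m(1)] by blast
  qed
qed

end

theorem corollary5:
  fixes c :: "'a::order \<Rightarrow> 'a" and z u :: 'a
  assumes "poset_compl c z u"
  shows "(strongly_D_continuous c z \<longrightarrow> pseudo_orthomodular c) \<and>
         (finite (UNIV :: 'a set) \<and> pseudo_orthomodular c \<longrightarrow> strongly_D_continuous c z)"
proof -
  interpret complemented_poset c z u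
    using assms by unfold_locales
  show ?thesis
  proof (intro conjI impI)
    show "pseudo_orthomodular c" if "strongly_D_continuous c z"
      using that by (rule strongly_D_continuous_imp_pseudo_orthomodular)
    show "strongly_D_continuous c z" if "finite (UNIV :: 'a set) \<and> pseudo_orthomodular c"
      using that finite_pseudo_orthomodular_set_le_Lb_Ub
      unfolding strongly_D_continuous_iff by blast
  qed
qed

end
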